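(* Let $F$ be a field of characteristic $0$, $L=F(I)$ with $I^2=-1$, and $D=(V,E)$ a simply laced diagram on vertices $v_1,\dots,v_n$. For $1\le r\le n$ let $\mathfrak k_{\le r}$ be the Lie algebra with generators $X_1,\dots,X_r$ and relations $[X_i,[X_i,X_j]]=-X_j$ if $\{v_i,v_j\}\in E$, $[X_i,X_j]=0$ if $i\ne j$ and $\{v_i,v_j\}\notin E$ ($i,j\le r$). Let $1\le r<n$ and let $\rho:\mathfrak k_{\le r}\to\operatorname{End}(L^s)$ be a generalized spin representation. (a) If $v_{r+1}$ is adjacent to none of $v_1,\dots,v_r$, then $\rho$ extends to a generalized spin representation $\rho':\mathfrak k_{\le r+1}\to\operatorname{End}(L^s)$ with $\rho'(X_{r+1})=\tfrac12I\,\mathrm{id}_s$. (b) Otherwise, let $s_0$ be the sign automorphism of $\mathfrak k_{\le r}$ with $s_0(X_i)=-X_i$ if $\{v_i,v_{r+1}\}\in E$ and $s_0(X_i)=X_i$ otherwise. Then there is a generalized spin representation $\rho':\mathfrak k_{\le r+1}\to\operatorname{End}(L^s\oplus L^s)$ with $\rho'|_{\mathfrak k_{\le r}}=\rho\oplus(\rho\circ s_0)$ and $\rho'(X_{r+1})=\tfrac12 I\,\mathrm{id}_s\otimes\begin{pmatrix}0&1\\1&0\end{pmatrix}$, i.e. in block form $\rho'(X_{r+1})=\begin{pmatrix}0&\tfrac12 I\,\mathrm{id}_s\\ \tfrac12 I\,\mathrm{id}_s&0\end{pmatrix}$.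
   Context: $\mathfrak k_{\le r}$ is (by Berman's theorem) the maximal compact subalgebra of the Kac--Moody algebra over $F$ whose diagram is the subgraph of $D$ induced on $v_1,\dots,v_r$, with Berman generators $X_1,\dots,X_r$. A generalized spin representation of a Lie algebra given by such a presentation is a Lie algebra homomorphism $\rho$ into $\operatorname{End}(L^s)$ (over $F$) with $\rho(X_i)^2=-\tfrac14\mathrm{id}_s$ for all generators $X_i$. A sign automorphism is $X_i\mapsto\epsilon_iX_i$ with $\epsilon_i\in\{\pm1\}$. *)

theory Defs
  imports "Jordan_Normal_Form.Matrix"
begin

definition lie_br :: "'a::comm_ring_1 mat \<Rightarrow> 'a mat \<Rightarrow> 'a mat" where
  "lie_br A B = A * B - B * A"

text \<open>Simply laced diagram on vertices 1..n: a simple graph given by a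
  symmetric irreflexive adjacency relation E (vertex v_i is the number i).\<close>
definition simply_laced_diagram :: "nat \<Rightarrow> (nat \<Rightarrow> nat \<Rightarrow> bool) \<Rightarrow> bool" where
  "simply_laced_diagram n E \<longleftrightarrow>
     (\<forall>i j. E i j \<longrightarrow> E j i) \<and> (\<forall>i. \<not> E i i) \<and>
     (\<forall>i j. E i j \<longrightarrow> i \<in> {1..n} \<and> j \<in> {1..n})"

text \<open>By the universal
  property of a Lie algebra given by generators and relations, a Lie algebra
  homomorphism rho : k_{<=r} -> End(L^s) is the same as an assignment
  X_i |-> rho i (i = 1..r) of s x s matrices satisfying the defining relations;
  we represent rho by these generator images.\<close>
definition gen_spin_rep ::
  "(nat \<Rightarrow> nat \<Rightarrow> bool) \<Rightarrow> nat \<Rightarrow> nat \<Rightarrow> (nat \<Rightarrow> 'a::field mat) \<Rightarrow> bool" where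
  "gen_spin_rep E r s \<rho> \<longleftrightarrow>
     (\<forall>i\<in>{1..r}. \<rho> i \<in> carrier_mat s s) \<and>
     (\<forall>i\<in>{1..r}. \<rho> i * \<rho> i = smult_mat (- (1/4)) (one_mat s)) \<and>
     (\<forall>i\<in>{1..r}. \<forall>j\<in>{1..r}. E i j \<longrightarrow>
         lie_br (\<rho> i) (lie_br (\<rho> i) (\<rho> j)) = - \<rho> j) \<and>
     (\<forall>i\<in>{1..r}. \<forall>j\<in>{1..r}. i \<noteq> j \<and> \<not> E i j \<longrightarrow>
         lie_br (\<rho> i) (\<rho> j) = zero_mat s s)"

end

theory Submission
  imports Defs
begin

text \<open>
  If \<open>X\<close> and \<open>Y\<close> anticommute and \<open>X\<^sup>2 = a\<close>, then \<open>[X,[X,Y]] = 4aY\<close>; if they commute,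
  \<open>[X,Y] = 0\<close>. Hence a matrix \<open>Y\<close> with \<open>Y\<^sup>2 = -1/4\<close> that anticommutes with the images of
  the neighbours of \<open>v\<^sub>r\<^sub>+\<^sub>1\<close> and commutes with the images of the other generators extends
  a generalized spin representation by \<open>X\<^sub>r\<^sub>+\<^sub>1 \<mapsto> Y\<close>. In (a) the scalar \<open>I/2\<close> commutes with
  everything. In (b) twisting by signs and taking direct sums preserve generalized spin
  representations, so \<open>\<rho> \<oplus> \<rho> \<circ> s\<^sub>0\<close> is one, and the swap matrix \<open>(I/2)\<cdot>[[0,1],[1,0]]\<close>
  commutes with \<open>diag(R,R)\<close> and anticommutes with \<open>diag(R,-R)\<close>.
\<close>

lemma one_smult_mat [simp]: "(1::'a::semiring_1) \<cdot>\<^sub>m A = A"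
  by (intro eq_matI) auto

lemma minus_one_smult_mat [simp]: "(- 1::'a::ring_1) \<cdot>\<^sub>m A = - A"
  by (intro eq_matI) auto

lemma smult_one_mat_commute:
  fixes A :: "'a::comm_ring_1 mat"
  assumes "A \<in> carrier_mat n n"
  shows "(c \<cdot>\<^sub>m 1\<^sub>m n) * A = A * (c \<cdot>\<^sub>m 1\<^sub>m n)"
  using assms by (simp add: mult_smult_assoc_mat[of _ n n] mult_smult_distrib[of A n n "1\<^sub>m n" n])

lemma smult_mult_smult_mat:
  fixes A B :: "'a::comm_ring_1 mat"
  assumes "A \<in> carrier_mat n n" "B \<in> carrier_mat n n"
  shows "(a \<cdot>\<^sub>m A) * (b \<cdot>\<^sub>m B) = (a * b) \<cdot>\<^sub>m (A * B)"
  using assms by (intro eq_matI) (auto simp: ac_simps)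

lemma lie_br_carrier [simp]:
  "A \<in> carrier_mat n n \<Longrightarrow> B \<in> carrier_mat n n \<Longrightarrow> lie_br A B \<in> carrier_mat n n"
  unfolding lie_br_def by (auto intro: minus_carrier_mat)

lemma lie_br_smult:
  fixes A B :: "'a::comm_ring_1 mat"
  assumes "A \<in> carrier_mat n n" "B \<in> carrier_mat n n"
  shows "lie_br (a \<cdot>\<^sub>m A) (b \<cdot>\<^sub>m B) = (a * b) \<cdot>\<^sub>m lie_br A B"
  using assms unfolding lie_br_def by (intro eq_matI) (auto simp: algebra_simps)

lemma lie_br_commuting:
  fixes A B :: "'a::comm_ring_1 mat"
  assumes "A \<in> carrier_mat n n" "B \<in> carrier_mat n n" "A * B = B * A"
  shows "lie_br A B = 0\<^sub>m n n"
  using assms unfolding lie_br_def by simp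

lemma lie_br_lie_br_anticommuting:
  fixes X Y :: "'a::comm_ring_1 mat"
  assumes X: "X \<in> carrier_mat n n" and Y: "Y \<in> carrier_mat n n"
    and anti: "Y * X = - (X * Y)" and sq: "X * X = a \<cdot>\<^sub>m 1\<^sub>m n"
  shows "lie_br X (lie_br X Y) = (4 * a) \<cdot>\<^sub>m Y"
proof -
  have XY: "X * Y \<in> carrier_mat n n" using X Y by simp
  have bracket: "lie_br X Y = 2 \<cdot>\<^sub>m (X * Y)"
    unfolding lie_br_def anti using XY by (intro eq_matI) auto
  have X_XY: "X * (X * Y) = a \<cdot>\<^sub>m Y"
    using X Y by (simp flip: assoc_mult_mat add: sq mult_smult_assoc_mat[of _ n n])
  have "(X * Y) * X = X * (Y * X)"
    using X Y by simp
  also have "\<dots> = - (a \<cdot>\<^sub>m Y)"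
    using X Y by (simp add: anti X_XY)
  finally have XY_X: "(X * Y) * X = - (a \<cdot>\<^sub>m Y)" .
  have "lie_br X (lie_br X Y) = 2 \<cdot>\<^sub>m (X * (X * Y)) - 2 \<cdot>\<^sub>m ((X * Y) * X)"
    unfolding bracket unfolding lie_br_def using X XY
    by (simp add: mult_smult_distrib mult_smult_assoc_mat)
  also have "\<dots> = (4 * a) \<cdot>\<^sub>m Y"
    unfolding X_XY XY_X using Y by (intro eq_matI) auto
  finally show ?thesis .
qed

lemma four_block_diag_mult:
  fixes A C :: "'a::comm_ring_1 mat"
  assumes "A \<in> carrier_mat s s" "B \<in> carrier_mat t t" "C \<in> carrier_mat s s" "D \<in> carrier_mat t t"
  shows "four_block_mat A (0\<^sub>m s t) (0\<^sub>m t s) B * four_block_mat C (0\<^sub>m s t) (0\<^sub>m t s) D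
    = four_block_mat (A * C) (0\<^sub>m s t) (0\<^sub>m t s) (B * D)"
  using assms by (simp add: mult_four_block_mat[where ?nr1.0 = s and ?n1.0 = s and ?n2.0 = t and ?nr2.0 = t
      and ?nc1.0 = s and ?nc2.0 = t])

lemma four_block_diag_uminus:
  fixes A :: "'a::comm_ring_1 mat"
  assumes "A \<in> carrier_mat s s" "B \<in> carrier_mat t t"
  shows "- four_block_mat A (0\<^sub>m s t) (0\<^sub>m t s) B = four_block_mat (- A) (0\<^sub>m s t) (0\<^sub>m t s) (- B)"
  using assms by (intro eq_matI) auto

lemma four_block_diag_lie_br:
  fixes A C :: "'a::comm_ring_1 mat"
  assumes "A \<in> carrier_mat s s" "B \<in> carrier_mat t t" "C \<in> carrier_mat s s" "D \<in> carrier_mat t t"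
  shows "lie_br (four_block_mat A (0\<^sub>m s t) (0\<^sub>m t s) B) (four_block_mat C (0\<^sub>m s t) (0\<^sub>m t s) D)
    = four_block_mat (lie_br A C) (0\<^sub>m s t) (0\<^sub>m t s) (lie_br B D)"
  using assms unfolding lie_br_def by (simp add: four_block_diag_mult) (intro eq_matI; auto)

lemma four_block_swap_square:
  fixes c :: "'a::comm_ring_1"
  shows "four_block_mat (0\<^sub>m s s) (c \<cdot>\<^sub>m 1\<^sub>m s) (c \<cdot>\<^sub>m 1\<^sub>m s) (0\<^sub>m s s)
       * four_block_mat (0\<^sub>m s s) (c \<cdot>\<^sub>m 1\<^sub>m s) (c \<cdot>\<^sub>m 1\<^sub>m s) (0\<^sub>m s s)
    = (c * c) \<cdot>\<^sub>m 1\<^sub>m (s + s)"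
  by (simp add: mult_four_block_mat[where ?nr1.0 = s and ?n1.0 = s and ?n2.0 = s and ?nr2.0 = s
      and ?nc1.0 = s and ?nc2.0 = s] flip: four_block_one_mat)
    (intro eq_matI; auto)

lemma four_block_swap_mult_sign_diag:
  fixes c e :: "'a::comm_ring_1"
  assumes R: "R \<in> carrier_mat s s" and e: "e * e = 1"
  defines "Y \<equiv> four_block_mat (0\<^sub>m s s) (c \<cdot>\<^sub>m 1\<^sub>m s) (c \<cdot>\<^sub>m 1\<^sub>m s) (0\<^sub>m s s)"
    and "A \<equiv> four_block_mat R (0\<^sub>m s s) (0\<^sub>m s s) (e \<cdot>\<^sub>m R)"
  shows "Y * A = e \<cdot>\<^sub>m (A * Y)"
proof -
  have e': "x * e * e = x" for x
    by (simp add: e mult.assoc)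
  show ?thesis
    using R unfolding Y_def A_def
    by (simp add: mult_four_block_mat[where ?nr1.0 = s and ?n1.0 = s and ?n2.0 = s and ?nr2.0 = s
          and ?nc1.0 = s and ?nc2.0 = s])
      (intro eq_matI; auto simp: e' scalar_prod_left_unit[OF col_carrier_vec[OF _ R]]
        mult.commute[of e] mult.assoc[symmetric])
qed

lemma gen_spin_repD:
  assumes "gen_spin_rep E r s \<rho>" "i \<in> {1..r}"
  shows "\<rho> i \<in> carrier_mat s s"
    and "\<rho> i * \<rho> i = (- (1/4)) \<cdot>\<^sub>m 1\<^sub>m s"
    and "j \<in> {1..r} \<Longrightarrow> E i j \<Longrightarrow> lie_br (\<rho> i) (lie_br (\<rho> i) (\<rho> j)) = - \<rho> j"
    and "j \<in> {1..r} \<Longrightarrow> i \<noteq> j \<Longrightarrow> \<not> E i j \<Longrightarrow> lie_br (\<rho> i) (\<rho> j) = 0\<^sub>m s s"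
  using assms unfolding gen_spin_rep_def by auto

lemma gen_spin_rep_sign_twist:
  fixes \<epsilon> :: "nat \<Rightarrow> 'a::field"
  assumes \<rho>: "gen_spin_rep E r s \<rho>" and \<epsilon>: "\<And>i. \<epsilon> i * \<epsilon> i = 1"
  shows "gen_spin_rep E r s (\<lambda>i. \<epsilon> i \<cdot>\<^sub>m \<rho> i)"
  unfolding gen_spin_rep_def
proof (intro conjI ballI impI)
  fix i j assume i: "i \<in> {1..r}" and j: "j \<in> {1..r}"
  note \<rho>ij = gen_spin_repD[OF \<rho> i] and \<rho>j = gen_spin_repD(1)[OF \<rho> j]
  show "\<epsilon> i \<cdot>\<^sub>m \<rho> i \<in> carrier_mat s s"
    using \<rho>ij by simp
  show "\<epsilon> i \<cdot>\<^sub>m \<rho> i * (\<epsilon> i \<cdot>\<^sub>m \<rho> i) = (- (1/4)) \<cdot>\<^sub>m 1\<^sub>m s"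
    using \<rho>ij by (simp add: smult_mult_smult_mat[of _ s] \<epsilon>)
  have "\<epsilon> i * (\<epsilon> i * \<epsilon> j) = \<epsilon> j"
    by (simp add: \<epsilon> flip: mult.assoc)
  then show "lie_br (\<epsilon> i \<cdot>\<^sub>m \<rho> i) (lie_br (\<epsilon> i \<cdot>\<^sub>m \<rho> i) (\<epsilon> j \<cdot>\<^sub>m \<rho> j)) = - (\<epsilon> j \<cdot>\<^sub>m \<rho> j)"
    if "E i j"
    using \<rho>ij \<rho>j that j by (simp add: lie_br_smult) (intro eq_matI; auto)
  show "lie_br (\<epsilon> i \<cdot>\<^sub>m \<rho> i) (\<epsilon> j \<cdot>\<^sub>m \<rho> j) = 0\<^sub>m s s" if "i \<noteq> j \<and> \<not> E i j"
    using \<rho>ij \<rho>j that j by (simp add: lie_br_smult)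
qed

lemma gen_spin_rep_direct_sum:
  assumes \<rho>: "gen_spin_rep E r s \<rho>" and \<sigma>: "gen_spin_rep E r t \<sigma>"
  shows "gen_spin_rep E r (s + t) (\<lambda>i. four_block_mat (\<rho> i) (0\<^sub>m s t) (0\<^sub>m t s) (\<sigma> i))"
  unfolding gen_spin_rep_def
proof (intro conjI ballI impI)
  fix i j assume i: "i \<in> {1..r}" and j: "j \<in> {1..r}"
  note \<rho>i = gen_spin_repD[OF \<rho> i] and \<rho>j = gen_spin_repD(1)[OF \<rho> j]
    and \<sigma>i = gen_spin_repD[OF \<sigma> i] and \<sigma>j = gen_spin_repD(1)[OF \<sigma> j]
  show "four_block_mat (\<rho> i) (0\<^sub>m s t) (0\<^sub>m t s) (\<sigma> i) \<in> carrier_mat (s + t) (s + t)"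
    using \<rho>i \<sigma>i by simp
  show "four_block_mat (\<rho> i) (0\<^sub>m s t) (0\<^sub>m t s) (\<sigma> i) * four_block_mat (\<rho> i) (0\<^sub>m s t) (0\<^sub>m t s) (\<sigma> i)
      = (- (1/4)) \<cdot>\<^sub>m 1\<^sub>m (s + t)"
    using \<rho>i \<sigma>i
    by (simp add: four_block_diag_mult smult_four_block_mat[where ?nr1.0 = s and ?nc1.0 = s and ?nr2.0 = t and ?nc2.0 = t]
        flip: four_block_one_mat)
  show "lie_br (four_block_mat (\<rho> i) (0\<^sub>m s t) (0\<^sub>m t s) (\<sigma> i))
      (lie_br (four_block_mat (\<rho> i) (0\<^sub>m s t) (0\<^sub>m t s) (\<sigma> i)) (four_block_mat (\<rho> j) (0\<^sub>m s t) (0\<^sub>m t s) (\<sigma> j)))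
      = - four_block_mat (\<rho> j) (0\<^sub>m s t) (0\<^sub>m t s) (\<sigma> j)" if "E i j"
    using \<rho>i \<rho>j \<sigma>i \<sigma>j j that by (simp add: four_block_diag_lie_br four_block_diag_uminus)
  show "lie_br (four_block_mat (\<rho> i) (0\<^sub>m s t) (0\<^sub>m t s) (\<sigma> i)) (four_block_mat (\<rho> j) (0\<^sub>m s t) (0\<^sub>m t s) (\<sigma> j))
      = 0\<^sub>m (s + t) (s + t)" if "i \<noteq> j \<and> \<not> E i j"
    using \<rho>i \<rho>j \<sigma>i \<sigma>j j that by (simp add: four_block_diag_lie_br)
qed

lemma gen_spin_rep_extend:
  fixes Y :: "'a::field_char_0 mat"
  assumes sym: "\<And>i j. E i j \<Longrightarrow> E j i" and irrefl: "\<And>i. \<not> E i i"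
    and \<rho>: "gen_spin_rep E r s \<rho>"
    and Y: "Y \<in> carrier_mat s s" and Y_square: "Y * Y = (- (1/4)) \<cdot>\<^sub>m 1\<^sub>m s"
    and anticomm: "\<And>j. j \<in> {1..r} \<Longrightarrow> E j (r+1) \<Longrightarrow> Y * \<rho> j = - (\<rho> j * Y)"
    and comm: "\<And>j. j \<in> {1..r} \<Longrightarrow> \<not> E j (r+1) \<Longrightarrow> Y * \<rho> j = \<rho> j * Y"
  shows "gen_spin_rep E (r+1) s (\<rho>(r+1 := Y))"
proof -
  have sym_iff: "E i j \<longleftrightarrow> E j i" for i j
    using sym by blast
  have four_quarters: "(4 * (- (1/4))) \<cdot>\<^sub>m M = - M" for M :: "'a mat"
    by (intro eq_matI) auto
  have adjacent: "lie_br Y (lie_br Y (\<rho> j)) = - \<rho> j" "lie_br (\<rho> j) (lie_br (\<rho> j) Y) = - Y"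
    if j: "j \<in> {1..r}" and "E j (r+1)" for j
  proof -
    note \<rho>j = gen_spin_repD(1,2)[OF \<rho> j]
    have "Y * \<rho> j = - (\<rho> j * Y)" "\<rho> j * Y = - (Y * \<rho> j)"
      using anticomm[OF that] by simp_all
    then show "lie_br Y (lie_br Y (\<rho> j)) = - \<rho> j" "lie_br (\<rho> j) (lie_br (\<rho> j) Y) = - Y"
      using lie_br_lie_br_anticommuting Y Y_square \<rho>j four_quarters by metis+
  qed
  have nonadjacent: "lie_br Y (\<rho> j) = 0\<^sub>m s s" "lie_br (\<rho> j) Y = 0\<^sub>m s s"
    if j: "j \<in> {1..r}" and "\<not> E j (r+1)" for j
    using lie_br_commuting[OF Y gen_spin_repD(1)[OF \<rho> j]]
      lie_br_commuting[OF gen_spin_repD(1)[OF \<rho> j] Y] comm[OF that] by auto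
  show ?thesis
    unfolding gen_spin_rep_def
  proof (intro conjI ballI impI)
    fix i j assume "i \<in> {1..r+1}" "j \<in> {1..r+1}"
    then have i: "i \<in> {1..r} \<or> i = r+1" and j: "j \<in> {1..r} \<or> j = r+1"
      by auto
    show "(\<rho>(r+1 := Y)) i \<in> carrier_mat s s" "(\<rho>(r+1 := Y)) i * (\<rho>(r+1 := Y)) i = (- (1/4)) \<cdot>\<^sub>m 1\<^sub>m s"
      using i gen_spin_repD(1,2)[OF \<rho>] Y Y_square by auto
    show "lie_br ((\<rho>(r+1 := Y)) i) (lie_br ((\<rho>(r+1 := Y)) i) ((\<rho>(r+1 := Y)) j)) = - (\<rho>(r+1 := Y)) j"
      if "E i j"
      using i j that gen_spin_repD(3)[OF \<rho>] adjacent sym irrefl by auto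
    show "lie_br ((\<rho>(r+1 := Y)) i) ((\<rho>(r+1 := Y)) j) = 0\<^sub>m s s" if "i \<noteq> j \<and> \<not> E i j"
      using i j that gen_spin_repD(4)[OF \<rho>] nonadjacent sym_iff by auto
  qed
qed

lemma gen_spin_rep_extend_scalar:
  fixes c :: "'a::field_char_0"
  assumes sym: "\<And>i j. E i j \<Longrightarrow> E j i" and irrefl: "\<And>i. \<not> E i i"
    and \<rho>: "gen_spin_rep E r s \<rho>" and c: "c * c = - (1/4)"
    and no_neighbour: "\<forall>i\<in>{1..r}. \<not> E i (r+1)"
  shows "gen_spin_rep E (r+1) s (\<rho>(r+1 := c \<cdot>\<^sub>m 1\<^sub>m s))"
proof (rule gen_spin_rep_extend[OF sym irrefl \<rho>])
  show "c \<cdot>\<^sub>m 1\<^sub>m s * (c \<cdot>\<^sub>m 1\<^sub>m s) = (- (1/4)) \<cdot>\<^sub>m 1\<^sub>m s"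
    by (simp add: smult_mult_smult_mat[of _ s] c)
  show "c \<cdot>\<^sub>m 1\<^sub>m s * \<rho> j = \<rho> j * (c \<cdot>\<^sub>m 1\<^sub>m s)" if "j \<in> {1..r}" for j
    using smult_one_mat_commute[OF gen_spin_repD(1)[OF \<rho> that]] .
qed (use no_neighbour in auto)

lemma gen_spin_rep_extend_doubled:
  fixes c :: "'a::field_char_0"
  assumes sym: "\<And>i j. E i j \<Longrightarrow> E j i" and irrefl: "\<And>i. \<not> E i i"
    and \<rho>: "gen_spin_rep E r s \<rho>" and c: "c * c = - (1/4)"
  defines "\<sigma> i \<equiv> four_block_mat (\<rho> i) (0\<^sub>m s s) (0\<^sub>m s s) ((if E i (r+1) then -1 else 1) \<cdot>\<^sub>m \<rho> i)"
    and "Y \<equiv> four_block_mat (0\<^sub>m s s) (c \<cdot>\<^sub>m 1\<^sub>m s) (c \<cdot>\<^sub>m 1\<^sub>m s) (0\<^sub>m s s)"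
  shows "gen_spin_rep E (r+1) (s+s) (\<sigma>(r+1 := Y))"
proof -
  define \<epsilon> where "\<epsilon> i = (if E i (r+1) then -1 else 1 :: 'a)" for i
  have \<sigma>: "gen_spin_rep E r (s+s) \<sigma>"
    unfolding \<sigma>_def \<epsilon>_def[symmetric]
    by (rule gen_spin_rep_direct_sum[OF \<rho> gen_spin_rep_sign_twist[OF \<rho>]]) (simp add: \<epsilon>_def)
  have Y_\<sigma>: "Y * \<sigma> j = \<epsilon> j \<cdot>\<^sub>m (\<sigma> j * Y)" if "j \<in> {1..r}" for j
    unfolding Y_def \<sigma>_def \<epsilon>_def[symmetric]
    by (rule four_block_swap_mult_sign_diag[OF gen_spin_repD(1)[OF \<rho> that]]) (simp add: \<epsilon>_def)
  show ?thesis
    using Y_\<sigma>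
    by (intro gen_spin_rep_extend[OF sym irrefl \<sigma>])
      (auto simp: Y_def four_block_swap_square c \<epsilon>_def)
qed

theorem mainTheorem8:
  fixes E :: "nat \<Rightarrow> nat \<Rightarrow> bool"
    and n r s :: nat
    and I :: "'a::field_char_0"
    and \<rho> :: "nat \<Rightarrow> 'a mat"
  assumes I: "I * I = -1"
    and D: "simply_laced_diagram n E"
    and r: "1 \<le> r" "r < n"
    and rho: "gen_spin_rep E r s \<rho>"
  shows
    "((\<forall>i\<in>{1..r}. \<not> E i (r+1)) \<longrightarrow>
        (\<exists>\<rho>'. gen_spin_rep E (r+1) s \<rho>' \<and>
              (\<forall>i\<in>{1..r}. \<rho>' i = \<rho> i) \<and>
              \<rho>' (r+1) = smult_mat (I/2) (one_mat s)))
   \<and> ((\<exists>i\<in>{1..r}. E i (r+1)) \<longrightarrow>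
        (\<exists>\<rho>'. gen_spin_rep E (r+1) (2*s) \<rho>' \<and>
              (\<forall>i\<in>{1..r}. \<rho>' i =
                  four_block_mat (\<rho> i) (zero_mat s s) (zero_mat s s)
                    (smult_mat (if E i (r+1) then -1 else 1) (\<rho> i))) \<and>
              \<rho>' (r+1) =
                  four_block_mat (zero_mat s s) (smult_mat (I/2) (one_mat s))
                    (smult_mat (I/2) (one_mat s)) (zero_mat s s)))"
proof -
  have sym: "\<And>i j. E i j \<Longrightarrow> E j i" and irrefl: "\<And>i. \<not> E i i"
    using D unfolding simply_laced_diagram_def by auto
  have half_I: "I/2 * (I/2) = - (1/4)"
    using I by (simp add: field_simps)
  show ?thesis (is "(_ \<longrightarrow> (\<exists>\<rho>'. ?A \<rho>')) \<and> (_ \<longrightarrow> (\<exists>\<rho>'. ?B \<rho>'))")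
  proof (intro conjI impI)
    assume "\<forall>i\<in>{1..r}. \<not> E i (r+1)"
    then have "?A (\<rho>(r+1 := (I/2) \<cdot>\<^sub>m 1\<^sub>m s))"
      using gen_spin_rep_extend_scalar[OF sym irrefl rho half_I] by auto
    then show "\<exists>\<rho>'. ?A \<rho>'" by blast
  next
    have "?B ((\<lambda>i. four_block_mat (\<rho> i) (0\<^sub>m s s) (0\<^sub>m s s) ((if E i (r+1) then -1 else 1) \<cdot>\<^sub>m \<rho> i))
        (r+1 := four_block_mat (0\<^sub>m s s) ((I/2) \<cdot>\<^sub>m 1\<^sub>m s) ((I/2) \<cdot>\<^sub>m 1\<^sub>m s) (0\<^sub>m s s)))"
      using gen_spin_rep_extend_doubled[OF sym irrefl rho half_I] by (auto simp: mult_2)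
    then show "\<exists>\<rho>'. ?B \<rho>'" by blast
  qed
qed

end
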